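(* In the algebra $\mathcal Y_d$ the following hold for all $r,s\ge0$: $[a_r,a_s]=0$; $[a_1,b_s]=b_s$; $[a_{r+1},b_s]-[a_r,b_{s+1}]=b_{r+s}-\sum_{t=0}^{r-1}b_{r+s-t-1}a_t$; $[b_{r+1},b_s]-[b_r,b_{s+1}]=b_rb_s+b_sb_r$.
   Context: Let $V=\mathbb C^d$ and $\mathfrak a=(\mathfrak{gl}(V)\ltimes V)\oplus(\mathfrak{gl}(V)\ltimes V^* )$ with basis $e_{ij}$, $e'_{ij}$ (standard matrix units of the two copies of $\mathfrak{gl}(V)$), $q_i$ (basis of $V$), $p_i$ (basis of $V^*$), brackets: standard $\mathfrak{gl}$ brackets among the $e$'s and among the $e'$'s, $[e_{ij},q_k]=\delta_{jk}q_i$, $[e'_{ij},p_k]=-\delta_{ki}p_j$, all other brackets of basis elements zero. Let $\mathfrak{gl}(V)_{\rm diag}$ be spanned by $e_{ij}+e'_{ij}$ and $\mathcal Y_d:=\big(U(\mathfrak a)/U(\mathfrak a)\mathfrak{gl}(V)_{\rm diag}\big)^{\mathfrak{gl}(V)_{\rm diag}}$ (an algebra, the quantum Hamiltonian reduction). Define in $\mathcal Y_d$ the images of $a_r=\sum_{i_1,\dots,i_r}e_{i_1i_2}e_{i_2i_3}\cdots e_{i_ri_1}$ ($r\ge1$), $a_0=d$, and $b_s=\sum_{i_1,\dots,i_{s+1}}p_{i_1}e_{i_1i_2}\cdots e_{i_si_{s+1}}q_{i_{s+1}}$ ($s\ge0$). *)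

theory Defs
  imports Complex_Main "HOL-Library.Function_Algebras"
begin

text \<open>Basis of the Lie algebra a = (gl(V) x| V) (+) (gl(V) x| V*), V = C^d,
  indices 0..d-1.  E i j = e_ij, E' i j = e'_ij, Q k = q_k, P k = p_k.\<close>
datatype gen = E nat nat | E' nat nat | Q nat | P nat

fun valid_gen :: "nat \<Rightarrow> gen \<Rightarrow> bool" where
  "valid_gen d (E i j) = (i < d \<and> j < d)"
| "valid_gen d (E' i j) = (i < d \<and> j < d)"
| "valid_gen d (Q k) = (k < d)"
| "valid_gen d (P k) = (k < d)"

text \<open>The free associative algebra T(a) on the basis: elements are coefficient
  functions on words (only finitely supported ones are reached below).\<close>
type_synonym tens = "gen list \<Rightarrow> complex"

definition mon :: "gen list \<Rightarrow> tens" where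
  "mon u = (\<lambda>w. if w = u then 1 else 0)"

definition tmult :: "tens \<Rightarrow> tens \<Rightarrow> tens" (infixl "\<cdot>" 70) where
  "tmult p q = (\<lambda>w. \<Sum>k\<le>length w. p (take k w) * q (drop k w))"

definition tscale :: "complex \<Rightarrow> tens \<Rightarrow> tens" where
  "tscale c p = (\<lambda>w. c * p w)"

definition kd :: "nat \<Rightarrow> nat \<Rightarrow> complex" where
  "kd i j = (if i = j then 1 else 0)"

fun lie :: "gen \<Rightarrow> gen \<Rightarrow> tens" where
  "lie (E i j) (E k l) = tscale (kd j k) (mon [E i l]) - tscale (kd l i) (mon [E k j])"
| "lie (E' i j) (E' k l) = tscale (kd j k) (mon [E' i l]) - tscale (kd l i) (mon [E' k j])"
| "lie (E i j) (Q k) = tscale (kd j k) (mon [Q i])"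
| "lie (Q k) (E i j) = - tscale (kd j k) (mon [Q i])"
| "lie (E' i j) (P k) = - tscale (kd k i) (mon [P j])"
| "lie (P k) (E' i j) = tscale (kd k i) (mon [P j])"
| "lie _ _ = 0"

definition rel :: "gen \<Rightarrow> gen \<Rightarrow> tens" where
  "rel x y = mon [x, y] - mon [y, x] - lie x y"

definition hdiag :: "nat \<Rightarrow> nat \<Rightarrow> tens" where
  "hdiag i j = mon [E i j] + mon [E' i j]"

text \<open>Preimage in T(a) of the left ideal U(a) gl(V)_diag of U(a):
  the two-sided ideal of PBW relations plus the left ideal generated by
  e_ij + e'_ij.\<close>
inductive_set qhr_ideal :: "nat \<Rightarrow> tens set" for d :: nat where
  zero: "0 \<in> qhr_ideal d"
| add: "p \<in> qhr_ideal d \<Longrightarrow> q \<in> qhr_ideal d \<Longrightarrow> p + q \<in> qhr_ideal d"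
| scale: "p \<in> qhr_ideal d \<Longrightarrow> tscale c p \<in> qhr_ideal d"
| pbw: "valid_gen d x \<Longrightarrow> valid_gen d y \<Longrightarrow> list_all (valid_gen d) u \<Longrightarrow>
        list_all (valid_gen d) v \<Longrightarrow> mon u \<cdot> rel x y \<cdot> mon v \<in> qhr_ideal d"
| diag: "i < d \<Longrightarrow> j < d \<Longrightarrow> list_all (valid_gen d) u \<Longrightarrow>
        mon u \<cdot> hdiag i j \<in> qhr_ideal d"

text \<open>Equality in the quantum Hamiltonian reduction Y_d (of representatives).\<close>
definition Yeq :: "nat \<Rightarrow> tens \<Rightarrow> tens \<Rightarrow> bool" where
  "Yeq d p q \<longleftrightarrow> p - q \<in> qhr_ideal d"

definition tcomm :: "tens \<Rightarrow> tens \<Rightarrow> tens" where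
  "tcomm p q = p \<cdot> q - q \<cdot> p"

definition idx :: "nat \<Rightarrow> nat \<Rightarrow> nat list set" where
  "idx d n = {is. length is = n \<and> (\<forall>i\<in>set is. i < d)}"

definition a_el :: "nat \<Rightarrow> nat \<Rightarrow> tens" where
  "a_el d r = (if r = 0 then tscale (of_nat d) (mon [])
     else (\<Sum>is\<in>idx d r. mon (map (\<lambda>k. E (is ! k) (is ! ((k + 1) mod r))) [0..<r])))"

definition b_el :: "nat \<Rightarrow> nat \<Rightarrow> tens" where
  "b_el d s = (\<Sum>is\<in>idx d (Suc s).
     mon ([P (is ! 0)] @ map (\<lambda>k. E (is ! k) (is ! (k + 1))) [0..<s] @ [Q (is ! s)]))"

end

theory Submission
  imports Defs
begin

text \<open>All four identities already hold in U(a), so we only divide by the two-sided ideal of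
  the defining relations of U(a).
  Regard E = (e_ij) as a d x d matrix over U(a), so that a_r = tr E^r and b_s = p E^s q.
  Since ad e_kl acts on the entries of E^r as gl(V) acts on matrices by conjugation, every a_r
  commutes with the e's and the p's, whence [a_r, a_s] = 0.  Moving q_k past E^r yields
  [(E^r)_ij, q_k] = sum_(t<r) (E^t q)_i (E^(r-1-t))_kj, from which [a_(r+1), b_s] - [a_r, b_(s+1)]
  is computed directly; r = 0 gives [a_1, b_s] = b_s because a_0 = d is central.  In the last
  identity the p's commute with everything involved, so it reduces to
  [v^(r+1)_i, v^s_k] - [v^r_i, v^(s+1)_k] = v^r_i v^s_k + v^s_i v^r_k for v^m = E^m q.  This follows
  from the symmetry of [v^r_l, v^s_k] in l and k, proved by induction on r + s.\<close>

section \<open>The tensor algebra T(a)\<close>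

lemma tmult_assoc: "(p \<cdot> q) \<cdot> r = p \<cdot> (q \<cdot> r)"
proof (rule ext)
  fix w :: "gen list"
  define n where "n = length w"
  define g where "g = (\<lambda>j m. p (take j w) * q (take m (drop j w)) * r (drop (j + m) w))"
  have "((p \<cdot> q) \<cdot> r) w = (\<Sum>k\<le>n. \<Sum>j\<le>k. g j (k - j))"
    unfolding tmult_def n_def g_def
    by (auto simp: sum_distrib_right min_def take_drop intro!: sum.cong)
  also have "\<dots> = (\<Sum>(j, m)\<in>{(j, m). j + m \<le> n}. g j m)"
    by (rule sum.triangle_reindex_eq[symmetric])
  also have "\<dots> = (\<Sum>j\<le>n. \<Sum>m\<le>n - j. g j m)"
    by (subst sum.Sigma) (auto intro!: sum.cong)
  also have "\<dots> = (p \<cdot> (q \<cdot> r)) w"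
    unfolding tmult_def n_def g_def
    by (auto simp: sum_distrib_left mult.assoc add.commute intro!: sum.cong)
  finally show "((p \<cdot> q) \<cdot> r) w = (p \<cdot> (q \<cdot> r)) w" .
qed

lemma tmult_add_left: "(p + q) \<cdot> r = p \<cdot> r + q \<cdot> r"
  unfolding tmult_def by (auto simp: distrib_right sum.distrib)

lemma tmult_add_right: "p \<cdot> (q + r) = p \<cdot> q + p \<cdot> r"
  unfolding tmult_def by (auto simp: distrib_left sum.distrib)

lemma tmult_tscale_left: "tscale c p \<cdot> q = tscale c (p \<cdot> q)"
  unfolding tmult_def tscale_def by (auto simp: sum_distrib_left mult.assoc)

lemma tmult_tscale_right: "p \<cdot> tscale c q = tscale c (p \<cdot> q)"
  unfolding tmult_def tscale_def by (auto simp: sum_distrib_left mult.left_commute)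

lemma tmult_mon: "mon u \<cdot> mon v = mon (u @ v)"
proof (rule ext)
  fix w :: "gen list"
  have split_iff: "(take k w = u \<and> drop k w = v) \<longleftrightarrow> (k = length u \<and> w = u @ v)"
    if "k \<le> length w" for k
    using that by (auto simp: min_def)
  have "(mon u \<cdot> mon v) w = (\<Sum>k\<le>length w. if k = length u \<and> w = u @ v then 1 else 0)"
    unfolding tmult_def mon_def by (intro sum.cong) (auto simp: split_iff)
  also have "\<dots> = mon (u @ v) w"
    by (auto simp: mon_def)
  finally show "(mon u \<cdot> mon v) w = mon (u @ v) w" .
qed

lemma tmult_mon_Nil_left: "mon [] \<cdot> p = p"
proof (rule ext)
  fix w :: "gen list"
  have "(mon [] \<cdot> p) w = (\<Sum>k\<le>length w. if k = 0 then p w else 0)"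
    unfolding tmult_def mon_def by (intro sum.cong) auto
  then show "(mon [] \<cdot> p) w = p w" by simp
qed

lemma tmult_mon_Nil_right: "p \<cdot> mon [] = p"
proof (rule ext)
  fix w :: "gen list"
  have "(p \<cdot> mon []) w = (\<Sum>k\<le>length w. if k = length w then p w else 0)"
    unfolding tmult_def mon_def by (intro sum.cong) auto
  then show "(p \<cdot> mon []) w = p w" by simp
qed

text \<open>A copy of tens whose ring multiplication is the concatenation product: on tens
  itself, * is the pointwise product of functions.\<close>
typedef talg = "UNIV :: tens set" by simp

setup_lifting type_definition_talg

instantiation talg :: ring_1
begin

lift_definition zero_talg :: talg is 0 .
lift_definition one_talg :: talg is "mon []" .
lift_definition plus_talg :: "talg \<Rightarrow> talg \<Rightarrow> talg" is "(+)" .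
lift_definition minus_talg :: "talg \<Rightarrow> talg \<Rightarrow> talg" is "(-)" .
lift_definition uminus_talg :: "talg \<Rightarrow> talg" is uminus .
lift_definition times_talg :: "talg \<Rightarrow> talg \<Rightarrow> talg" is tmult .

instance
proof
  show "(0::talg) \<noteq> 1"
    by transfer (auto simp: mon_def fun_eq_iff)
qed (transfer, simp add: algebra_simps tmult_assoc tmult_add_left tmult_add_right
     tmult_mon_Nil_left tmult_mon_Nil_right)+

end

lift_definition monom :: "gen list \<Rightarrow> talg" is mon .
lift_definition smul :: "complex \<Rightarrow> talg \<Rightarrow> talg" is tscale .
lift_definition lie_talg :: "gen \<Rightarrow> gen \<Rightarrow> talg" is lie .

lemma monom_append: "monom (u @ v) = monom u * monom v"
  by transfer (simp add: tmult_mon)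

lemma monom_Nil: "monom [] = 1"
  by transfer simp

lemma Rep_talg_sum: "Rep_talg (sum f A) = (\<Sum>x\<in>A. Rep_talg (f x))"
  by (induction A rule: infinite_finite_induct) (auto simp: zero_talg.rep_eq plus_talg.rep_eq)

lemma Rep_talg_of_nat: "Rep_talg (of_nat n) = tscale (of_nat n) (mon [])"
  by (induction n) (auto simp: zero_talg.rep_eq plus_talg.rep_eq one_talg.rep_eq tscale_def
      fun_eq_iff algebra_simps)

lemma smul_mult_left: "smul c x * y = smul c (x * y)"
  by transfer (simp add: tmult_tscale_left)

lemma smul_mult_right: "x * smul c y = smul c (x * y)"
  by transfer (simp add: tmult_tscale_right)

lemma smul_minus_one: "smul (-1) x = - x"
  by transfer (auto simp: tscale_def fun_eq_iff)

lemma smul_half_double: "smul (1/2) (x + x) = x"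
  by transfer (auto simp: tscale_def fun_eq_iff)

section \<open>Computing modulo the relations of U(a)\<close>

inductive_set pbw_ideal :: "nat \<Rightarrow> talg set" for d :: nat where
  zero: "0 \<in> pbw_ideal d"
| add: "x \<in> pbw_ideal d \<Longrightarrow> y \<in> pbw_ideal d \<Longrightarrow> x + y \<in> pbw_ideal d"
| smul: "x \<in> pbw_ideal d \<Longrightarrow> smul c x \<in> pbw_ideal d"
| rel: "valid_gen d x \<Longrightarrow> valid_gen d y \<Longrightarrow> list_all (valid_gen d) u \<Longrightarrow>
        list_all (valid_gen d) v \<Longrightarrow>
        monom u * (monom [x] * monom [y] - monom [y] * monom [x] - lie_talg x y) * monom v
          \<in> pbw_ideal d"

lemma Rep_pbw_ideal: "x \<in> pbw_ideal d \<Longrightarrow> Rep_talg x \<in> qhr_ideal d"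
proof (induction rule: pbw_ideal.induct)
  case (rel x y u v)
  have "Rep_talg (monom [x] * monom [y] - monom [y] * monom [x] - lie_talg x y) = rel x y"
    by (simp add: rel_def minus_talg.rep_eq times_talg.rep_eq monom.rep_eq lie_talg.rep_eq tmult_mon)
  then show ?case
    using rel by (simp add: times_talg.rep_eq monom.rep_eq qhr_ideal.pbw)
qed (simp_all only: zero_talg.rep_eq plus_talg.rep_eq smul.rep_eq qhr_ideal.intros)

lemma pbw_ideal_uminus: "x \<in> pbw_ideal d \<Longrightarrow> - x \<in> pbw_ideal d"
  using pbw_ideal.smul[of x d "-1"] by (simp add: smul_minus_one)

lemma pbw_ideal_monom_mult:
  "x \<in> pbw_ideal d \<Longrightarrow> list_all (valid_gen d) w \<Longrightarrow> monom w * x \<in> pbw_ideal d"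
proof (induction rule: pbw_ideal.induct)
  case (rel x y u v)
  then show ?case
    using pbw_ideal.rel[of d x y "w @ u" v] by (simp add: monom_append mult.assoc)
qed (auto simp: distrib_left smul_mult_right intro: pbw_ideal.intros)

lemma pbw_ideal_mult_monom:
  "x \<in> pbw_ideal d \<Longrightarrow> list_all (valid_gen d) w \<Longrightarrow> x * monom w \<in> pbw_ideal d"
proof (induction rule: pbw_ideal.induct)
  case (rel x y u v)
  then show ?case
    using pbw_ideal.rel[of d x y u "v @ w"] by (simp add: monom_append mult.assoc)
qed (auto simp: distrib_right smul_mult_left intro: pbw_ideal.intros)

text \<open>The subalgebra generated by the basis of a.  Only it, not all of talg, is stable under
  multiplication by pbw_ideal, which is why pbw_cong requires both sides to lie in it.\<close>
inductive valid_poly :: "nat \<Rightarrow> talg \<Rightarrow> bool" for d :: nat where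
  monom: "list_all (valid_gen d) u \<Longrightarrow> valid_poly d (monom u)"
| zero [simp, intro]: "valid_poly d 0"
| add [simp, intro]: "valid_poly d x \<Longrightarrow> valid_poly d y \<Longrightarrow> valid_poly d (x + y)"
| uminus [simp, intro]: "valid_poly d x \<Longrightarrow> valid_poly d (- x)"
| mult [simp, intro]: "valid_poly d x \<Longrightarrow> valid_poly d y \<Longrightarrow> valid_poly d (x * y)"

lemma valid_poly_one [simp, intro]: "valid_poly d 1"
  using valid_poly.monom[of d "[]"] by (simp add: monom_Nil)

lemma valid_poly_diff [simp, intro]: "valid_poly d x \<Longrightarrow> valid_poly d y \<Longrightarrow> valid_poly d (x - y)"
  using valid_poly.add[OF _ valid_poly.uminus, of d x y] by simp

lemma valid_poly_sum [simp, intro]: "(\<And>i. i \<in> A \<Longrightarrow> valid_poly d (f i)) \<Longrightarrow> valid_poly d (sum f A)"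
  by (induction A rule: infinite_finite_induct) auto

lemma pbw_ideal_mult_left: "valid_poly d z \<Longrightarrow> x \<in> pbw_ideal d \<Longrightarrow> z * x \<in> pbw_ideal d"
  by (induction arbitrary: x rule: valid_poly.induct)
     (auto simp: distrib_right mult.assoc pbw_ideal_monom_mult intro: pbw_ideal.intros pbw_ideal_uminus)

lemma pbw_ideal_mult_right: "valid_poly d z \<Longrightarrow> x \<in> pbw_ideal d \<Longrightarrow> x * z \<in> pbw_ideal d"
  by (induction arbitrary: x rule: valid_poly.induct)
     (auto simp: distrib_left pbw_ideal_mult_monom intro: pbw_ideal.intros pbw_ideal_uminus
      simp flip: mult.assoc)

definition pbw_cong :: "nat \<Rightarrow> talg \<Rightarrow> talg \<Rightarrow> bool" where
  "pbw_cong d x y \<longleftrightarrow> valid_poly d x \<and> valid_poly d y \<and> x - y \<in> pbw_ideal d"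

definition comm :: "'a::ring \<Rightarrow> 'a \<Rightarrow> 'a" where
  "comm x y = x * y - y * x"

lemma comm_mult_right: "comm x (y * z) = y * comm x z + comm x y * z"
  unfolding comm_def by (simp add: algebra_simps)

lemma comm_mult_left: "comm (x * y) z = x * comm y z + comm x z * y"
  unfolding comm_def by (simp add: algebra_simps)

lemma comm_sum_right: "comm x (sum f A) = (\<Sum>i\<in>A. comm x (f i))"
  unfolding comm_def by (simp add: sum_distrib_left sum_distrib_right sum_subtractf)

lemma comm_sum_left: "comm (sum f A) x = (\<Sum>i\<in>A. comm (f i) x)"
  unfolding comm_def by (simp add: sum_distrib_left sum_distrib_right sum_subtractf)

lemma comm_swap: "comm x y = - comm y x"
  unfolding comm_def by simp

lemma if_zero_mult: "(if b then x else 0) * y = (if b then x * y else (0::'a::mult_zero))"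
  by simp

lemma mult_if_zero: "y * (if b then x else 0) = (if b then y * x else (0::'a::mult_zero))"
  by simp

definition e_gen :: "nat \<Rightarrow> nat \<Rightarrow> talg" where "e_gen i j = monom [E i j]"
definition q_gen :: "nat \<Rightarrow> talg" where "q_gen k = monom [Q k]"
definition p_gen :: "nat \<Rightarrow> talg" where "p_gen k = monom [P k]"

lemma lie_talg_E_E:
  "lie_talg (E i j) (E k l) = (if j = k then e_gen i l else 0) - (if l = i then e_gen k j else 0)"
  unfolding e_gen_def by transfer (auto simp: tscale_def kd_def fun_eq_iff)

lemma lie_talg_E_Q: "lie_talg (E i j) (Q k) = (if j = k then q_gen i else 0)"
  unfolding q_gen_def by transfer (auto simp: tscale_def kd_def fun_eq_iff)

lemma lie_talg_vanish:
  "lie_talg (P i) (E j k) = 0" "lie_talg (P i) (Q j) = 0" "lie_talg (P i) (P j) = 0"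
  "lie_talg (Q i) (Q j) = 0"
  by (transfer, simp add: zero_fun_def)+

context
  fixes d :: nat
begin

abbreviation pbw_cong_d (infix "\<approx>" 50) where "x \<approx> y \<equiv> pbw_cong d x y"

lemma pbw_cong_refl: "valid_poly d x \<Longrightarrow> x \<approx> x"
  by (simp add: pbw_cong_def pbw_ideal.zero)

lemma pbw_cong_sym: "x \<approx> y \<Longrightarrow> y \<approx> x"
  unfolding pbw_cong_def using pbw_ideal_uminus by fastforce

lemma pbw_cong_trans [trans]: "x \<approx> y \<Longrightarrow> y \<approx> z \<Longrightarrow> x \<approx> z"
  unfolding pbw_cong_def using pbw_ideal.add[of "x - y" d "y - z"] by simp

text \<open>Without these, calculations mixing = and the congruence use the generic substitution
  rule, whose higher-order unification does not terminate in practice on the sums below.\<close>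
lemma pbw_cong_eq_trans [trans]: "x = y \<Longrightarrow> y \<approx> z \<Longrightarrow> x \<approx> z"
  and pbw_cong_trans_eq [trans]: "x \<approx> y \<Longrightarrow> y = z \<Longrightarrow> x \<approx> z"
  by simp_all

lemma pbw_cong_add: "x \<approx> y \<Longrightarrow> x' \<approx> y' \<Longrightarrow> x + x' \<approx> y + y'"
  unfolding pbw_cong_def using pbw_ideal.add[of "x - y" d "x' - y'"] by (simp add: algebra_simps)

lemma pbw_cong_uminus: "x \<approx> y \<Longrightarrow> - x \<approx> - y"
  unfolding pbw_cong_def using pbw_ideal_uminus[of "x - y" d] by simp

lemma pbw_cong_diff: "x \<approx> y \<Longrightarrow> x' \<approx> y' \<Longrightarrow> x - x' \<approx> y - y'"
  using pbw_cong_add[OF _ pbw_cong_uminus] by simp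

lemma pbw_cong_mult: "x \<approx> y \<Longrightarrow> x' \<approx> y' \<Longrightarrow> x * x' \<approx> y * y'"
proof -
  assume cong: "x \<approx> y" "x' \<approx> y'"
  have "x * x' - y * y' = (x - y) * x' + y * (x' - y')"
    by (simp add: algebra_simps)
  with cong show ?thesis
    unfolding pbw_cong_def by (auto intro: pbw_ideal.add pbw_ideal_mult_left pbw_ideal_mult_right)
qed

lemma pbw_cong_sum: "(\<And>i. i \<in> A \<Longrightarrow> f i \<approx> g i) \<Longrightarrow> sum f A \<approx> sum g A"
  by (induction A rule: infinite_finite_induct) (auto intro: pbw_cong_add pbw_cong_refl)

lemma pbw_cong_zero_if_double: "x + x \<approx> 0 \<Longrightarrow> valid_poly d x \<Longrightarrow> x \<approx> 0"
  unfolding pbw_cong_def using pbw_ideal.smul[of "x + x" d "1/2"] by (simp add: smul_half_double)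

lemma pbw_cong_comm_mult_right:
  "comm x z \<approx> c \<Longrightarrow> comm x y \<approx> c' \<Longrightarrow> valid_poly d y \<Longrightarrow> valid_poly d z \<Longrightarrow>
   comm x (y * z) \<approx> y * c + c' * z"
  unfolding comm_mult_right by (intro pbw_cong_add pbw_cong_mult pbw_cong_refl)

lemma pbw_cong_comm_mult_left:
  "comm y z \<approx> c \<Longrightarrow> comm x z \<approx> c' \<Longrightarrow> valid_poly d x \<Longrightarrow> valid_poly d y \<Longrightarrow>
   comm (x * y) z \<approx> x * c + c' * y"
  unfolding comm_mult_left by (intro pbw_cong_add pbw_cong_mult pbw_cong_refl)

lemma pbw_cong_comm_sum_right:
  "(\<And>i. i \<in> A \<Longrightarrow> comm x (f i) \<approx> g i) \<Longrightarrow> comm x (sum f A) \<approx> sum g A"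
  unfolding comm_sum_right by (rule pbw_cong_sum)

lemma pbw_cong_comm_sum_left:
  "(\<And>i. i \<in> A \<Longrightarrow> comm (f i) x \<approx> g i) \<Longrightarrow> comm (sum f A) x \<approx> sum g A"
  unfolding comm_sum_left by (rule pbw_cong_sum)

lemma pbw_cong_comm_swap: "comm x y \<approx> c \<Longrightarrow> comm y x \<approx> - c"
  by (subst comm_swap) (rule pbw_cong_uminus)

lemma valid_poly_gens [simp, intro]:
  "i < d \<Longrightarrow> j < d \<Longrightarrow> valid_poly d (e_gen i j)"
  "i < d \<Longrightarrow> valid_poly d (q_gen i)"
  "i < d \<Longrightarrow> valid_poly d (p_gen i)"
  unfolding e_gen_def q_gen_def p_gen_def by (auto intro: valid_poly.monom)

lemma valid_poly_gen: "valid_gen d x \<Longrightarrow> valid_poly d (monom [x])"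
  by (auto intro: valid_poly.monom)

lemma comm_gen_gen:
  assumes "valid_gen d x" "valid_gen d y" "valid_poly d (lie_talg x y)"
  shows "comm (monom [x]) (monom [y]) \<approx> lie_talg x y"
proof -
  have "comm (monom [x]) (monom [y]) - lie_talg x y
      = monom [] * (monom [x] * monom [y] - monom [y] * monom [x] - lie_talg x y) * monom []"
    by (simp add: comm_def monom_Nil)
  also have "\<dots> \<in> pbw_ideal d"
    using assms by (intro pbw_ideal.rel) auto
  finally show ?thesis
    using assms by (auto simp: pbw_cong_def comm_def valid_poly_gen)
qed

lemma comm_e_e: "i < d \<Longrightarrow> j < d \<Longrightarrow> k < d \<Longrightarrow> l < d \<Longrightarrow>
  comm (e_gen i j) (e_gen k l) \<approx> (if j = k then e_gen i l else 0) - (if l = i then e_gen k j else 0)"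
  using comm_gen_gen[of "E i j" "E k l", folded e_gen_def] by (simp add: lie_talg_E_E)

lemma comm_e_q: "i < d \<Longrightarrow> j < d \<Longrightarrow> k < d \<Longrightarrow>
  comm (e_gen i j) (q_gen k) \<approx> (if j = k then q_gen i else 0)"
  using comm_gen_gen[of "E i j" "Q k", folded e_gen_def q_gen_def] by (simp add: lie_talg_E_Q)

lemma comm_p_e: "i < d \<Longrightarrow> j < d \<Longrightarrow> k < d \<Longrightarrow> comm (p_gen i) (e_gen j k) \<approx> 0"
  using comm_gen_gen[of "P i" "E j k", folded p_gen_def e_gen_def] by (simp add: lie_talg_vanish)

lemma comm_p_q: "i < d \<Longrightarrow> j < d \<Longrightarrow> comm (p_gen i) (q_gen j) \<approx> 0"
  using comm_gen_gen[of "P i" "Q j", folded p_gen_def q_gen_def] by (simp add: lie_talg_vanish)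

lemma comm_p_p: "i < d \<Longrightarrow> j < d \<Longrightarrow> comm (p_gen i) (p_gen j) \<approx> 0"
  using comm_gen_gen[of "P i" "P j", folded p_gen_def] by (simp add: lie_talg_vanish)

lemma comm_q_q: "i < d \<Longrightarrow> j < d \<Longrightarrow> comm (q_gen i) (q_gen j) \<approx> 0"
  using comm_gen_gen[of "Q i" "Q j", folded q_gen_def] by (simp add: lie_talg_vanish)

section \<open>Powers of the matrix E = (e_ij)\<close>

fun Epow :: "nat \<Rightarrow> nat \<Rightarrow> nat \<Rightarrow> talg" where
  "Epow 0 i j = (if i = j then 1 else 0)"
| "Epow (Suc r) i j = (\<Sum>l<d. e_gen i l * Epow r l j)"

definition Epow_q :: "nat \<Rightarrow> nat \<Rightarrow> talg" where
  "Epow_q m i = (\<Sum>j<d. Epow m i j * q_gen j)"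

definition a_gen :: "nat \<Rightarrow> talg" where
  "a_gen r = (\<Sum>i<d. Epow r i i)"

definition b_gen :: "nat \<Rightarrow> talg" where
  "b_gen s = (\<Sum>i<d. p_gen i * Epow_q s i)"

lemma valid_poly_Epow [simp, intro]: "i < d \<Longrightarrow> valid_poly d (Epow r i j)"
  by (induction r arbitrary: i) auto

lemma valid_poly_Epow_q [simp, intro]: "i < d \<Longrightarrow> valid_poly d (Epow_q m i)"
  unfolding Epow_q_def by auto

lemma valid_poly_a_gen [simp, intro]: "valid_poly d (a_gen r)"
  unfolding a_gen_def by auto

lemma valid_poly_b_gen [simp, intro]: "valid_poly d (b_gen s)"
  unfolding b_gen_def by auto

lemma valid_poly_comm [simp, intro]: "valid_poly d x \<Longrightarrow> valid_poly d y \<Longrightarrow> valid_poly d (comm x y)"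
  unfolding comm_def by auto

lemma Epow_add: "i < d \<Longrightarrow> (\<Sum>k<d. Epow r i k * Epow s k l) = Epow (r + s) i l"
proof (induction r arbitrary: i)
  case 0
  then show ?case by (simp add: if_zero_mult mult_if_zero)
next
  case (Suc r)
  have "(\<Sum>k<d. Epow (Suc r) i k * Epow s k l) = (\<Sum>k<d. \<Sum>j<d. e_gen i j * (Epow r j k * Epow s k l))"
    by (simp add: sum_distrib_right mult.assoc)
  also have "\<dots> = (\<Sum>j<d. e_gen i j * (\<Sum>k<d. Epow r j k * Epow s k l))"
    by (subst sum.swap) (simp add: sum_distrib_left)
  also have "\<dots> = Epow (Suc r + s) i l"
    using Suc by simp
  finally show ?case .
qed

lemma Epow_Suc_right: "i < d \<Longrightarrow> j < d \<Longrightarrow> Epow (Suc r) i j = (\<Sum>k<d. Epow r i k * e_gen k j)"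
  using Epow_add[of i r 1 j] by (simp add: if_zero_mult mult_if_zero)

lemma Epow_q_0: "i < d \<Longrightarrow> Epow_q 0 i = q_gen i"
  unfolding Epow_q_def by (simp add: if_zero_mult mult_if_zero)

lemma Epow_q_Suc: "Epow_q (Suc m) i = (\<Sum>l<d. e_gen i l * Epow_q m l)"
proof -
  have "Epow_q (Suc m) i = (\<Sum>j<d. \<Sum>l<d. e_gen i l * (Epow m l j * q_gen j))"
    unfolding Epow_q_def by (simp add: sum_distrib_right mult.assoc)
  also have "\<dots> = (\<Sum>l<d. e_gen i l * Epow_q m l)"
    unfolding Epow_q_def by (subst sum.swap) (simp add: sum_distrib_left)
  finally show ?thesis .
qed

lemma Epow_mult_Epow_q: "i < d \<Longrightarrow> (\<Sum>k<d. Epow r i k * Epow_q s k) = Epow_q (r + s) i"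
proof -
  assume "i < d"
  have "(\<Sum>k<d. Epow r i k * Epow_q s k) = (\<Sum>k<d. \<Sum>j<d. Epow r i k * (Epow s k j * q_gen j))"
    unfolding Epow_q_def by (simp add: sum_distrib_left)
  also have "\<dots> = (\<Sum>j<d. (\<Sum>k<d. Epow r i k * Epow s k j) * q_gen j)"
    by (subst sum.swap) (simp add: sum_distrib_right mult.assoc)
  also have "\<dots> = Epow_q (r + s) i"
    using \<open>i < d\<close> by (simp add: Epow_add Epow_q_def)
  finally show ?thesis .
qed

lemma comm_p_Epow: "k < d \<Longrightarrow> i < d \<Longrightarrow> comm (p_gen k) (Epow r i j) \<approx> 0"
proof (induction r arbitrary: i)
  case 0
  then show ?case by (simp add: comm_def pbw_cong_refl)
next
  case (Suc r)
  then have "comm (p_gen k) (Epow (Suc r) i j) \<approx> (\<Sum>l<d. e_gen i l * 0 + 0 * Epow r l j)"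
    unfolding Epow.simps
    by (intro pbw_cong_comm_sum_right pbw_cong_comm_mult_right comm_p_e) auto
  then show ?case by simp
qed

lemma comm_p_Epow_q: "k < d \<Longrightarrow> i < d \<Longrightarrow> comm (p_gen k) (Epow_q m i) \<approx> 0"
proof -
  assume "k < d" "i < d"
  then have "comm (p_gen k) (Epow_q m i) \<approx> (\<Sum>j<d. Epow m i j * 0 + 0 * q_gen j)"
    unfolding Epow_q_def
    by (intro pbw_cong_comm_sum_right pbw_cong_comm_mult_right comm_p_Epow comm_p_q) auto
  then show ?thesis by simp
qed

lemma comm_p_a: "k < d \<Longrightarrow> comm (p_gen k) (a_gen r) \<approx> 0"
  using pbw_cong_sum[of "{..<d}" "\<lambda>i. comm (p_gen k) (Epow r i i)" "\<lambda>_. 0"]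
  by (simp add: a_gen_def comm_sum_right comm_p_Epow)

lemma comm_e_Epow: "k < d \<Longrightarrow> l < d \<Longrightarrow> i < d \<Longrightarrow>
  comm (e_gen k l) (Epow r i j) \<approx> (if l = i then Epow r k j else 0) - (if j = k then Epow r i l else 0)"
proof (induction r arbitrary: i)
  case 0
  then show ?case by (auto simp: comm_def pbw_cong_refl)
next
  case (Suc r)
  have "comm (e_gen k l) (Epow (Suc r) i j)
      \<approx> (\<Sum>m<d. e_gen i m * ((if l = m then Epow r k j else 0) - (if j = k then Epow r m l else 0))
          + ((if l = i then e_gen k m else 0) - (if m = k then e_gen i l else 0)) * Epow r m j)"
    unfolding Epow.simps using Suc
    by (intro pbw_cong_comm_sum_right pbw_cong_comm_mult_right comm_e_e Suc.IH) auto
  also have "\<dots> = (if l = i then Epow (Suc r) k j else 0) - (if j = k then Epow (Suc r) i l else 0)"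
    using Suc.prems
    by (simp add: algebra_simps sum.distrib sum_subtractf if_zero_mult mult_if_zero sum_distrib_left)
  finally show ?case .
qed

lemma comm_e_a: "k < d \<Longrightarrow> l < d \<Longrightarrow> comm (e_gen k l) (a_gen r) \<approx> 0"
proof -
  assume "k < d" "l < d"
  then have "comm (e_gen k l) (a_gen r)
      \<approx> (\<Sum>i<d. (if l = i then Epow r k i else 0) - (if i = k then Epow r i l else 0))"
    unfolding a_gen_def by (intro pbw_cong_comm_sum_right comm_e_Epow) auto
  also have "\<dots> = 0"
    using \<open>k < d\<close> \<open>l < d\<close> by (simp add: sum_subtractf)
  finally show ?thesis .
qed

lemma comm_Epow_a: "i < d \<Longrightarrow> comm (Epow s i j) (a_gen r) \<approx> 0"
proof (induction s arbitrary: i)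
  case 0
  then show ?case by (simp add: comm_def pbw_cong_refl)
next
  case (Suc s)
  then have "comm (Epow (Suc s) i j) (a_gen r) \<approx> (\<Sum>l<d. e_gen i l * 0 + 0 * Epow s l j)"
    unfolding Epow.simps
    by (intro pbw_cong_comm_sum_left pbw_cong_comm_mult_left comm_e_a Suc.IH) auto
  then show ?case by simp
qed

theorem comm_a_a: "comm (a_gen r) (a_gen s) \<approx> 0"
proof -
  have "comm (a_gen r) (a_gen s) \<approx> (\<Sum>i<d. - 0)"
    unfolding a_gen_def[of s]
    by (intro pbw_cong_comm_sum_right pbw_cong_comm_swap comm_Epow_a) auto
  then show ?thesis by simp
qed

lemma comm_Epow_q_gen: "i < d \<Longrightarrow> k < d \<Longrightarrow>
  comm (Epow r i j) (q_gen k) \<approx> (\<Sum>t<r. Epow_q t i * Epow (r - 1 - t) k j)"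
proof (induction r arbitrary: i)
  case 0
  then show ?case by (simp add: comm_def pbw_cong_refl)
next
  case (Suc r)
  have "comm (Epow (Suc r) i j) (q_gen k)
      \<approx> (\<Sum>l<d. e_gen i l * (\<Sum>t<r. Epow_q t l * Epow (r - 1 - t) k j)
          + (if l = k then q_gen i else 0) * Epow r l j)"
    unfolding Epow.simps using Suc
    by (intro pbw_cong_comm_sum_left pbw_cong_comm_mult_left comm_e_q Suc.IH) auto
  also have "\<dots> = (\<Sum>t<r. (\<Sum>l<d. e_gen i l * Epow_q t l) * Epow (r - 1 - t) k j) + q_gen i * Epow r k j"
    using Suc.prems
    by (simp add: sum.distrib if_zero_mult sum_distrib_left sum_distrib_right mult.assoc
        sum.swap[of _ "{..<r}"])
  also have "\<dots> = (\<Sum>t<Suc r. Epow_q t i * Epow (Suc r - 1 - t) k j)"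
    using Suc.prems
    by (subst sum.lessThan_Suc_shift) (simp add: Epow_q_Suc Epow_q_0 add.commute del: sum.lessThan_Suc)
  finally show ?case .
qed

lemma comm_e_Epow_q: "k < d \<Longrightarrow> j < d \<Longrightarrow> i < d \<Longrightarrow>
  comm (e_gen k j) (Epow_q t i) \<approx> (if j = i then Epow_q t k else 0)"
proof -
  assume "k < d" "j < d" "i < d"
  then have "comm (e_gen k j) (Epow_q t i)
      \<approx> (\<Sum>l<d. Epow t i l * (if j = l then q_gen k else 0)
          + ((if j = i then Epow t k l else 0) - (if l = k then Epow t i j else 0)) * q_gen l)"
    unfolding Epow_q_def
    by (intro pbw_cong_comm_sum_right pbw_cong_comm_mult_right comm_e_q comm_e_Epow) auto
  also have "\<dots> = (if j = i then Epow_q t k else 0)"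
    using \<open>k < d\<close> \<open>j < d\<close>
    by (simp add: sum.distrib sum_subtractf algebra_simps if_zero_mult mult_if_zero Epow_q_def)
  finally show ?thesis .
qed

lemma comm_Epow_q_q: "k < d \<Longrightarrow> l < d \<Longrightarrow>
  comm (Epow_q s k) (q_gen l) \<approx> (\<Sum>t<s. Epow_q t k * Epow_q (s - 1 - t) l)"
proof -
  assume "k < d" "l < d"
  then have "comm (Epow_q s k) (q_gen l)
      \<approx> (\<Sum>j<d. Epow s k j * 0 + (\<Sum>t<s. Epow_q t k * Epow (s - 1 - t) l j) * q_gen j)"
    unfolding Epow_q_def[of s k]
    by (intro pbw_cong_comm_sum_left pbw_cong_comm_mult_left comm_q_q comm_Epow_q_gen) auto
  also have "\<dots> = (\<Sum>j<d. \<Sum>t<s. Epow_q t k * (Epow (s - 1 - t) l j * q_gen j))"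
    by (simp add: sum_distrib_right mult.assoc)
  also have "\<dots> = (\<Sum>t<s. Epow_q t k * Epow_q (s - 1 - t) l)"
    by (subst sum.swap) (simp add: Epow_q_def sum_distrib_left)
  finally show ?thesis .
qed

lemma comm_a_q: "k < d \<Longrightarrow>
  comm (a_gen r) (q_gen k) \<approx> (\<Sum>t<r. \<Sum>i<d. Epow_q t i * Epow (r - 1 - t) k i)"
proof -
  assume "k < d"
  then have "comm (a_gen r) (q_gen k) \<approx> (\<Sum>i<d. \<Sum>t<r. Epow_q t i * Epow (r - 1 - t) k i)"
    unfolding a_gen_def by (intro pbw_cong_comm_sum_left comm_Epow_q_gen) auto
  also have "\<dots> = (\<Sum>t<r. \<Sum>i<d. Epow_q t i * Epow (r - 1 - t) k i)"
    by (rule sum.swap)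
  finally show ?thesis .
qed

lemma e_mult_Epow_q_Epow: "k < d \<Longrightarrow>
  (\<Sum>j<d. e_gen k j * (\<Sum>i<d. Epow_q t i * Epow n j i))
    \<approx> (\<Sum>i<d. Epow_q t i * Epow (Suc n) k i) + Epow_q t k * a_gen n"
proof -
  assume "k < d"
  have "(\<Sum>j<d. e_gen k j * (\<Sum>i<d. Epow_q t i * Epow n j i))
      = (\<Sum>j<d. \<Sum>i<d. (e_gen k j * Epow_q t i) * Epow n j i)"
    by (simp add: sum_distrib_left mult.assoc)
  also have "\<dots> = (\<Sum>j<d. \<Sum>i<d. (Epow_q t i * e_gen k j + comm (e_gen k j) (Epow_q t i)) * Epow n j i)"
    by (simp add: comm_def)
  also have "\<dots> \<approx> (\<Sum>j<d. \<Sum>i<d. (Epow_q t i * e_gen k j + (if j = i then Epow_q t k else 0)) * Epow n j i)"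
    using \<open>k < d\<close>
    by (intro pbw_cong_sum pbw_cong_mult pbw_cong_add pbw_cong_refl comm_e_Epow_q) auto
  also have "\<dots> = (\<Sum>j<d. \<Sum>i<d. Epow_q t i * (e_gen k j * Epow n j i)) + (\<Sum>j<d. Epow_q t k * Epow n j j)"
    by (simp add: algebra_simps sum.distrib if_zero_mult)
  also have "\<dots> = (\<Sum>i<d. \<Sum>j<d. Epow_q t i * (e_gen k j * Epow n j i)) + Epow_q t k * a_gen n"
    unfolding a_gen_def sum_distrib_left by (rule arg_cong2[where f = "(+)", OF sum.swap refl])
  also have "\<dots> = (\<Sum>i<d. Epow_q t i * Epow (Suc n) k i) + Epow_q t k * a_gen n"
    by (simp only: Epow.simps sum_distrib_left)
  finally show ?thesis .
qed

lemma comm_a_Suc_q: "k < d \<Longrightarrow>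
  comm (a_gen (Suc r)) (q_gen k) - (\<Sum>j<d. e_gen k j * comm (a_gen r) (q_gen j))
    \<approx> Epow_q r k - (\<Sum>t<r. Epow_q (r - 1 - t) k * a_gen t)"
proof -
  assume "k < d"
  define S where "S t = (\<Sum>i<d. Epow_q t i * Epow (r - t) k i)" for t
  have "(\<Sum>j<d. e_gen k j * comm (a_gen r) (q_gen j))
      \<approx> (\<Sum>j<d. e_gen k j * (\<Sum>t<r. \<Sum>i<d. Epow_q t i * Epow (r - 1 - t) j i))"
    using \<open>k < d\<close> by (intro pbw_cong_sum pbw_cong_mult pbw_cong_refl comm_a_q) auto
  also have "\<dots> = (\<Sum>t<r. \<Sum>j<d. e_gen k j * (\<Sum>i<d. Epow_q t i * Epow (r - 1 - t) j i))"
    by (subst sum.swap) (simp add: sum_distrib_left)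
  also have "\<dots> \<approx> (\<Sum>t<r. S t + Epow_q t k * a_gen (r - 1 - t))"
  proof (intro pbw_cong_sum)
    fix t assume "t \<in> {..<r}"
    then have "Suc (r - 1 - t) = r - t" by auto
    then show "(\<Sum>j<d. e_gen k j * (\<Sum>i<d. Epow_q t i * Epow (r - 1 - t) j i))
        \<approx> S t + Epow_q t k * a_gen (r - 1 - t)"
      using e_mult_Epow_q_Epow[OF \<open>k < d\<close>, of t "r - 1 - t"] by (simp add: S_def)
  qed
  finally have "comm (a_gen (Suc r)) (q_gen k) - (\<Sum>j<d. e_gen k j * comm (a_gen r) (q_gen j))
      \<approx> (\<Sum>t<Suc r. S t) - (\<Sum>t<r. S t + Epow_q t k * a_gen (r - 1 - t))"
    using comm_a_q[OF \<open>k < d\<close>, of "Suc r"] by (intro pbw_cong_diff) (simp_all add: S_def)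
  also have "\<dots> = S r - (\<Sum>t<r. Epow_q t k * a_gen (r - 1 - t))"
    by (simp add: sum.distrib)
  also have "\<dots> = Epow_q r k - (\<Sum>t<r. Epow_q (r - 1 - t) k * a_gen t)"
    using \<open>k < d\<close> sum.nat_diff_reindex[of "\<lambda>t. Epow_q (r - 1 - t) k * a_gen t" r]
    by (simp add: S_def mult_if_zero)
  finally show ?thesis .
qed

lemma comm_a_b: "comm (a_gen r) (b_gen s) \<approx> (\<Sum>i<d. p_gen i * (\<Sum>j<d. Epow s i j * comm (a_gen r) (q_gen j)))"
proof -
  have "comm (a_gen r) (Epow_q s i) \<approx> (\<Sum>j<d. Epow s i j * comm (a_gen r) (q_gen j) + (- 0) * q_gen j)"
    if "i < d" for i
    unfolding Epow_q_def using that
    by (intro pbw_cong_comm_sum_right pbw_cong_comm_mult_right pbw_cong_refl pbw_cong_comm_swap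
        comm_Epow_a) auto
  then have "comm (a_gen r) (b_gen s)
      \<approx> (\<Sum>i<d. p_gen i * (\<Sum>j<d. Epow s i j * comm (a_gen r) (q_gen j) + (- 0) * q_gen j) + (- 0) * Epow_q s i)"
    unfolding b_gen_def
    by (intro pbw_cong_comm_sum_right pbw_cong_comm_mult_right pbw_cong_comm_swap comm_p_a) auto
  then show ?thesis by simp
qed

lemma Epow_Suc_mult_sum: "i < d \<Longrightarrow>
  (\<Sum>j<d. Epow (Suc s) i j * f j) = (\<Sum>k<d. Epow s i k * (\<Sum>j<d. e_gen k j * f j))"
proof -
  assume "i < d"
  then have "(\<Sum>j<d. Epow (Suc s) i j * f j) = (\<Sum>j<d. \<Sum>k<d. Epow s i k * (e_gen k j * f j))"
    by (simp add: Epow_Suc_right sum_distrib_right mult.assoc del: Epow.simps)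
  also have "\<dots> = (\<Sum>k<d. Epow s i k * (\<Sum>j<d. e_gen k j * f j))"
    by (subst sum.swap) (simp add: sum_distrib_left)
  finally show ?thesis .
qed

lemma Epow_mult_Epow_q_sum: "i < d \<Longrightarrow>
  (\<Sum>k<d. Epow s i k * (Epow_q r k - (\<Sum>t<r. Epow_q (r - 1 - t) k * c t)))
    = Epow_q (s + r) i - (\<Sum>t<r. Epow_q (s + (r - 1 - t)) i * c t)"
proof -
  assume "i < d"
  have "(\<Sum>k<d. Epow s i k * (\<Sum>t<r. Epow_q (r - 1 - t) k * c t))
      = (\<Sum>k<d. \<Sum>t<r. Epow s i k * (Epow_q (r - 1 - t) k * c t))"
    by (simp add: sum_distrib_left)
  also have "\<dots> = (\<Sum>t<r. \<Sum>k<d. Epow s i k * (Epow_q (r - 1 - t) k * c t))"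
    by (rule sum.swap)
  also have "\<dots> = (\<Sum>t<r. (\<Sum>k<d. Epow s i k * Epow_q (r - 1 - t) k) * c t)"
    by (simp add: sum_distrib_right mult.assoc)
  finally have "(\<Sum>k<d. Epow s i k * (\<Sum>t<r. Epow_q (r - 1 - t) k * c t))
      = (\<Sum>t<r. (\<Sum>k<d. Epow s i k * Epow_q (r - 1 - t) k) * c t)" .
  with \<open>i < d\<close> show ?thesis
    by (simp add: right_diff_distrib sum_subtractf Epow_mult_Epow_q)
qed

theorem comm_a_b_shift: "comm (a_gen (Suc r)) (b_gen s) - comm (a_gen r) (b_gen (Suc s))
   \<approx> b_gen (r + s) - (\<Sum>t<r. b_gen (r + s - t - 1) * a_gen t)"
proof -
  define W where "W r j = comm (a_gen r) (q_gen j)" for r j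
  have "comm (a_gen (Suc r)) (b_gen s) - comm (a_gen r) (b_gen (Suc s))
     \<approx> (\<Sum>i<d. p_gen i * (\<Sum>j<d. Epow s i j * W (Suc r) j))
       - (\<Sum>i<d. p_gen i * (\<Sum>j<d. Epow (Suc s) i j * W r j))"
    unfolding W_def by (intro pbw_cong_diff comm_a_b)
  also have "\<dots> = (\<Sum>i<d. p_gen i * (\<Sum>k<d. Epow s i k * (W (Suc r) k - (\<Sum>j<d. e_gen k j * W r j))))"
    by (simp add: Epow_Suc_mult_sum right_diff_distrib sum_subtractf del: Epow.simps)
  also have "\<dots> \<approx> (\<Sum>i<d. p_gen i * (\<Sum>k<d. Epow s i k
                   * (Epow_q r k - (\<Sum>t<r. Epow_q (r - 1 - t) k * a_gen t))))"
    unfolding W_def by (intro pbw_cong_sum pbw_cong_mult pbw_cong_refl comm_a_Suc_q) auto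
  also have "\<dots> = (\<Sum>i<d. p_gen i * (Epow_q (s + r) i - (\<Sum>t<r. Epow_q (s + (r - 1 - t)) i * a_gen t)))"
    by (rule sum.cong[OF refl]) (simp only: lessThan_iff Epow_mult_Epow_q_sum)
  also have "\<dots> = b_gen (s + r) - (\<Sum>i<d. \<Sum>t<r. p_gen i * Epow_q (s + (r - 1 - t)) i * a_gen t)"
    by (simp add: b_gen_def right_diff_distrib sum_subtractf sum_distrib_left mult.assoc)
  also have "\<dots> = b_gen (s + r) - (\<Sum>t<r. \<Sum>i<d. p_gen i * Epow_q (s + (r - 1 - t)) i * a_gen t)"
    by (subst sum.swap) (rule refl)
  also have "\<dots> = b_gen (r + s) - (\<Sum>t<r. b_gen (r + s - t - 1) * a_gen t)"
  proof (rule arg_cong2[where f = "(-)"])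
    show "b_gen (s + r) = b_gen (r + s)"
      by (simp add: add.commute)
    show "(\<Sum>t<r. \<Sum>i<d. p_gen i * Epow_q (s + (r - 1 - t)) i * a_gen t)
        = (\<Sum>t<r. b_gen (r + s - t - 1) * a_gen t)"
    proof (rule sum.cong[OF refl])
      fix t assume "t \<in> {..<r}"
      then have "s + (r - 1 - t) = r + s - t - 1" by auto
      then show "(\<Sum>i<d. p_gen i * Epow_q (s + (r - 1 - t)) i * a_gen t) = b_gen (r + s - t - 1) * a_gen t"
        by (simp only: b_gen_def sum_distrib_right)
    qed
  qed
  finally show ?thesis .
qed

lemma comm_a_1_b: "comm (a_gen 1) (b_gen s) \<approx> b_gen s"
proof -
  have "comm (a_gen 0) x = 0" for x
    by (simp add: a_gen_def comm_def mult_of_nat_commute)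
  then show ?thesis
    using comm_a_b_shift[of 0 s] by simp
qed

lemma comm_Epow_q_Suc_left: "i < d \<Longrightarrow> k < d \<Longrightarrow>
  comm (Epow_q (Suc r) i) (Epow_q s k)
    \<approx> (\<Sum>j<d. e_gen i j * comm (Epow_q r j) (Epow_q s k)) + Epow_q s i * Epow_q r k"
proof -
  assume "i < d" "k < d"
  then have "comm (Epow_q (Suc r) i) (Epow_q s k)
      \<approx> (\<Sum>j<d. e_gen i j * comm (Epow_q r j) (Epow_q s k) + (if j = k then Epow_q s i else 0) * Epow_q r j)"
    unfolding Epow_q_Suc
    by (intro pbw_cong_comm_sum_left pbw_cong_comm_mult_left pbw_cong_refl comm_e_Epow_q) auto
  also have "\<dots> = (\<Sum>j<d. e_gen i j * comm (Epow_q r j) (Epow_q s k)) + Epow_q s i * Epow_q r k"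
    using \<open>k < d\<close> by (simp add: sum.distrib if_zero_mult)
  finally show ?thesis .
qed

lemma comm_Epow_q_Suc_right: "k < d \<Longrightarrow> l < d \<Longrightarrow>
  comm (Epow_q r k) (Epow_q (Suc s) l)
    \<approx> (\<Sum>j<d. e_gen l j * comm (Epow_q r k) (Epow_q s j)) - Epow_q r l * Epow_q s k"
proof -
  assume "k < d" "l < d"
  then have "comm (Epow_q r k) (Epow_q (Suc s) l)
      \<approx> (\<Sum>j<d. e_gen l j * comm (Epow_q r k) (Epow_q s j) + (- (if j = k then Epow_q r l else 0)) * Epow_q s j)"
    unfolding Epow_q_Suc[of s l]
    by (intro pbw_cong_comm_sum_right pbw_cong_comm_mult_right pbw_cong_refl pbw_cong_comm_swap
        comm_e_Epow_q) auto
  also have "\<dots> = (\<Sum>j<d. e_gen l j * comm (Epow_q r k) (Epow_q s j)) - Epow_q r l * Epow_q s k"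
    using \<open>k < d\<close> by (simp add: sum_subtractf if_zero_mult)
  finally show ?thesis .
qed

lemma comm_Epow_q_Suc_shift:
  assumes sym: "\<And>l k. l < d \<Longrightarrow> k < d \<Longrightarrow>
      comm (Epow_q r l) (Epow_q s k) \<approx> comm (Epow_q r k) (Epow_q s l)"
    and "l < d" "k < d"
  shows "comm (Epow_q (Suc r) l) (Epow_q s k)
    \<approx> comm (Epow_q r k) (Epow_q (Suc s) l) + Epow_q r l * Epow_q s k + Epow_q s l * Epow_q r k"
proof -
  have "comm (Epow_q (Suc r) l) (Epow_q s k)
      \<approx> (\<Sum>j<d. e_gen l j * comm (Epow_q r j) (Epow_q s k)) + Epow_q s l * Epow_q r k"
    using assms(2,3) by (rule comm_Epow_q_Suc_left)
  also have "\<dots> \<approx> (\<Sum>j<d. e_gen l j * comm (Epow_q r k) (Epow_q s j)) + Epow_q s l * Epow_q r k"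
    using assms by (intro pbw_cong_add pbw_cong_sum pbw_cong_mult pbw_cong_refl sym) auto
  also have "\<dots> = ((\<Sum>j<d. e_gen l j * comm (Epow_q r k) (Epow_q s j)) - Epow_q r l * Epow_q s k)
      + Epow_q r l * Epow_q s k + Epow_q s l * Epow_q r k"
    by simp
  also have "\<dots> \<approx> comm (Epow_q r k) (Epow_q (Suc s) l) + Epow_q r l * Epow_q s k + Epow_q s l * Epow_q r k"
    using assms(2,3) by (intro pbw_cong_add pbw_cong_refl pbw_cong_sym[OF comm_Epow_q_Suc_right]) auto
  finally show ?thesis .
qed

lemma sum_reflect_lessThan:
  fixes g :: "nat \<Rightarrow> nat \<Rightarrow> 'a::comm_monoid_add"
  shows "(\<Sum>t<n. g t (n - 1 - t)) = (\<Sum>t<n. g (n - 1 - t) t)"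
proof -
  have "(\<Sum>t<n. g (n - 1 - t) t) = (\<Sum>t<n. g (n - 1 - (n - Suc t)) (n - Suc t))"
    by (rule sum.nat_diff_reindex[symmetric])
  also have "\<dots> = (\<Sum>t<n. g t (n - 1 - t))"
    by (rule sum.cong) auto
  finally show ?thesis by simp
qed

text \<open>The case r = 0 of comm_Epow_q_sym: the antisymmetric part X of the commutators
  satisfies X = - X, hence X = 0 in characteristic 0.\<close>
lemma comm_q_Epow_q_sym:
  assumes sym: "\<And>t l k. t < n \<Longrightarrow> l < d \<Longrightarrow> k < d \<Longrightarrow>
      comm (Epow_q t l) (Epow_q (n - 1 - t) k) \<approx> comm (Epow_q t k) (Epow_q (n - 1 - t) l)"
    and "l < d" "k < d"
  shows "comm (q_gen l) (Epow_q n k) \<approx> comm (q_gen k) (Epow_q n l)"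
proof -
  define S where "S l k = (\<Sum>t<n. Epow_q t k * Epow_q (n - 1 - t) l)" for l k
  define X where "X = S l k - S k l"
  have valid_X: "valid_poly d X"
    using assms(2,3) by (auto simp: X_def S_def)
  have "X = (\<Sum>t<n. comm (Epow_q t k) (Epow_q (n - 1 - t) l))"
    unfolding X_def S_def comm_def
    using sum_reflect_lessThan[of "\<lambda>a b. Epow_q a l * Epow_q b k"] by (simp add: sum_subtractf)
  also have "\<dots> \<approx> (\<Sum>t<n. comm (Epow_q t l) (Epow_q (n - 1 - t) k))"
    using assms(2,3) by (intro pbw_cong_sum sym) auto
  also have "\<dots> = - X"
    unfolding X_def S_def comm_def
    using sum_reflect_lessThan[of "\<lambda>a b. Epow_q a k * Epow_q b l"] by (simp add: sum_subtractf)
  finally have "X + X \<approx> - X + X"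
    using valid_X by (intro pbw_cong_add pbw_cong_refl)
  then have "X + X \<approx> 0"
    by simp
  then have "X \<approx> 0"
    using valid_X by (rule pbw_cong_zero_if_double)
  have "comm (q_gen l) (Epow_q n k) \<approx> - S l k"
    using assms(2,3) comm_Epow_q_q[of k l n] by (simp add: comm_swap[of "q_gen l"] pbw_cong_uminus S_def)
  also have "- S l k = - (S k l + X)"
    by (simp add: X_def)
  also have "\<dots> \<approx> - (S k l + 0)"
    using assms(2,3) \<open>X \<approx> 0\<close> by (intro pbw_cong_uminus pbw_cong_add pbw_cong_refl) (auto simp: S_def)
  also have "\<dots> \<approx> comm (q_gen k) (Epow_q n l)"
    using assms(2,3) comm_Epow_q_q[of l k n]
    by (simp add: comm_swap[of "q_gen k"] S_def pbw_cong_sym pbw_cong_uminus)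
  finally show ?thesis .
qed

lemma comm_Epow_q_sym_Suc:
  assumes sym: "\<And>l k. l < d \<Longrightarrow> k < d \<Longrightarrow>
      comm (Epow_q r l) (Epow_q s k) \<approx> comm (Epow_q r k) (Epow_q s l)"
    and sym_Suc: "\<And>l k. l < d \<Longrightarrow> k < d \<Longrightarrow>
      comm (Epow_q r l) (Epow_q (Suc s) k) \<approx> comm (Epow_q r k) (Epow_q (Suc s) l)"
    and "l < d" "k < d"
  shows "comm (Epow_q (Suc r) l) (Epow_q s k) \<approx> comm (Epow_q (Suc r) k) (Epow_q s l)"
proof -
  have "comm (Epow_q (Suc r) l) (Epow_q s k)
      \<approx> comm (Epow_q r k) (Epow_q (Suc s) l) + Epow_q r l * Epow_q s k + Epow_q s l * Epow_q r k"
    using assms by (intro comm_Epow_q_Suc_shift)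
  also have "\<dots> \<approx> comm (Epow_q r l) (Epow_q (Suc s) k) + Epow_q r l * Epow_q s k + Epow_q s l * Epow_q r k"
    using assms by (intro pbw_cong_add pbw_cong_refl sym_Suc) auto
  also have "\<dots> = comm (Epow_q r l) (Epow_q (Suc s) k) + Epow_q r k * Epow_q s l + Epow_q s k * Epow_q r l
      + (comm (Epow_q r l) (Epow_q s k) - comm (Epow_q r k) (Epow_q s l))"
    by (simp add: comm_def algebra_simps)
  also have "\<dots> \<approx> comm (Epow_q r l) (Epow_q (Suc s) k) + Epow_q r k * Epow_q s l + Epow_q s k * Epow_q r l
      + (comm (Epow_q r k) (Epow_q s l) - comm (Epow_q r k) (Epow_q s l))"
    using assms by (intro pbw_cong_add pbw_cong_diff pbw_cong_refl sym) auto
  also have "\<dots> \<approx> comm (Epow_q (Suc r) k) (Epow_q s l)"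
    using assms by (auto intro: pbw_cong_sym[OF comm_Epow_q_Suc_shift])
  finally show ?thesis .
qed

lemma comm_Epow_q_sym: "l < d \<Longrightarrow> k < d \<Longrightarrow>
  comm (Epow_q r l) (Epow_q s k) \<approx> comm (Epow_q r k) (Epow_q s l)"
proof (induction "r + s" arbitrary: r s l k rule: less_induct)
  case less
  define n where "n = r + s"
  have smaller: "comm (Epow_q r' l) (Epow_q s' k) \<approx> comm (Epow_q r' k) (Epow_q s' l)"
    if "r' + s' < n" "l < d" "k < d" for r' s' l k
    using less.hyps that unfolding n_def by blast
  have "comm (Epow_q r' l) (Epow_q (n - r') k) \<approx> comm (Epow_q r' k) (Epow_q (n - r') l)"
    if "r' \<le> n" "l < d" "k < d" for r' l k
    using that
  proof (induction r' arbitrary: l k)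
    case 0
    then show ?case
      using comm_q_Epow_q_sym[of n l k] smaller by (simp add: Epow_q_0)
  next
    case (Suc r')
    have "comm (Epow_q r' l) (Epow_q (n - Suc r') k) \<approx> comm (Epow_q r' k) (Epow_q (n - Suc r') l)"
      if "l < d" "k < d" for l k
      using Suc.prems(1) that by (intro smaller) auto
    moreover have "n - r' = Suc (n - Suc r')"
      using Suc.prems(1) by simp
    ultimately show ?case
      using Suc by (intro comm_Epow_q_sym_Suc) auto
  qed
  then show ?case
    using less.prems unfolding n_def by (metis add_diff_cancel_left' le_add1)
qed

lemma comm_Epow_q_shift: "i < d \<Longrightarrow> k < d \<Longrightarrow>
  comm (Epow_q (Suc r) i) (Epow_q s k) - comm (Epow_q r i) (Epow_q (Suc s) k)
    \<approx> Epow_q r i * Epow_q s k + Epow_q s i * Epow_q r k"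
proof -
  assume "i < d" "k < d"
  then have "comm (Epow_q (Suc r) i) (Epow_q s k) - comm (Epow_q r i) (Epow_q (Suc s) k)
      \<approx> (comm (Epow_q r i) (Epow_q (Suc s) k) + Epow_q r i * Epow_q s k + Epow_q s i * Epow_q r k)
        - comm (Epow_q r i) (Epow_q (Suc s) k)"
    by (intro pbw_cong_diff pbw_cong_refl pbw_cong_trans[OF comm_Epow_q_Suc_shift]
        pbw_cong_add comm_Epow_q_sym) auto
  then show ?thesis
    by simp
qed

lemma pbw_cong_mult_swap:
  "comm x y \<approx> 0 \<Longrightarrow> valid_poly d x \<Longrightarrow> valid_poly d y \<Longrightarrow> x * y \<approx> y * x"
proof -
  assume "comm x y \<approx> 0" "valid_poly d x" "valid_poly d y"
  then have "y * x + comm x y \<approx> y * x + 0"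
    by (intro pbw_cong_add pbw_cong_refl) auto
  then show ?thesis
    by (simp add: comm_def)
qed

lemma sum_p_p_swap:
  assumes "\<And>i k. i < d \<Longrightarrow> k < d \<Longrightarrow> valid_poly d (F i k)"
  shows "(\<Sum>i<d. \<Sum>k<d. p_gen i * p_gen k * F i k) \<approx> (\<Sum>i<d. \<Sum>k<d. p_gen i * p_gen k * F k i)"
proof -
  have "(\<Sum>i<d. \<Sum>k<d. p_gen i * p_gen k * F i k) \<approx> (\<Sum>i<d. \<Sum>k<d. p_gen k * p_gen i * F i k)"
    using assms by (intro pbw_cong_sum pbw_cong_mult pbw_cong_refl pbw_cong_mult_swap comm_p_p) auto
  also have "\<dots> = (\<Sum>i<d. \<Sum>k<d. p_gen i * p_gen k * F k i)"
    by (rule sum.swap)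
  finally show ?thesis .
qed

lemma b_mult_b:
  "b_gen x * b_gen y \<approx> (\<Sum>i<d. \<Sum>k<d. p_gen i * p_gen k * (Epow_q x i * Epow_q y k))"
proof -
  have "b_gen x * b_gen y = (\<Sum>i<d. \<Sum>k<d. p_gen i * (Epow_q x i * p_gen k) * Epow_q y k)"
    unfolding b_gen_def by (simp only: sum_product mult.assoc)
  also have "\<dots> \<approx> (\<Sum>i<d. \<Sum>k<d. p_gen i * (p_gen k * Epow_q x i) * Epow_q y k)"
    using pbw_cong_comm_swap[OF comm_p_Epow_q]
    by (intro pbw_cong_sum pbw_cong_mult pbw_cong_refl pbw_cong_mult_swap) auto
  also have "\<dots> = (\<Sum>i<d. \<Sum>k<d. p_gen i * p_gen k * (Epow_q x i * Epow_q y k))"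
    by (simp add: mult.assoc)
  finally show ?thesis .
qed

lemma comm_b_b:
  "comm (b_gen x) (b_gen y) \<approx> (\<Sum>i<d. \<Sum>k<d. p_gen i * p_gen k * comm (Epow_q x i) (Epow_q y k))"
proof -
  have "comm (b_gen x) (b_gen y)
      \<approx> (\<Sum>i<d. \<Sum>k<d. p_gen i * p_gen k * (Epow_q x i * Epow_q y k))
        - (\<Sum>i<d. \<Sum>k<d. p_gen i * p_gen k * (Epow_q y k * Epow_q x i))"
    unfolding comm_def
    by (intro pbw_cong_diff b_mult_b pbw_cong_trans[OF b_mult_b sum_p_p_swap]) auto
  also have "\<dots> = (\<Sum>i<d. \<Sum>k<d. p_gen i * p_gen k * comm (Epow_q x i) (Epow_q y k))"
    by (simp add: comm_def sum_subtractf right_diff_distrib)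
  finally show ?thesis .
qed

theorem comm_b_b_shift:
  "comm (b_gen (Suc r)) (b_gen s) - comm (b_gen r) (b_gen (Suc s))
    \<approx> b_gen r * b_gen s + b_gen s * b_gen r"
proof -
  have "comm (b_gen (Suc r)) (b_gen s) - comm (b_gen r) (b_gen (Suc s))
      \<approx> (\<Sum>i<d. \<Sum>k<d. p_gen i * p_gen k * comm (Epow_q (Suc r) i) (Epow_q s k))
        - (\<Sum>i<d. \<Sum>k<d. p_gen i * p_gen k * comm (Epow_q r i) (Epow_q (Suc s) k))"
    by (intro pbw_cong_diff comm_b_b)
  also have "\<dots> = (\<Sum>i<d. \<Sum>k<d. p_gen i * p_gen k
      * (comm (Epow_q (Suc r) i) (Epow_q s k) - comm (Epow_q r i) (Epow_q (Suc s) k)))"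
    by (simp add: sum_subtractf right_diff_distrib)
  also have "\<dots> \<approx> (\<Sum>i<d. \<Sum>k<d. p_gen i * p_gen k * (Epow_q r i * Epow_q s k + Epow_q s i * Epow_q r k))"
    by (intro pbw_cong_sum pbw_cong_mult pbw_cong_refl comm_Epow_q_shift) auto
  also have "\<dots> = (\<Sum>i<d. \<Sum>k<d. p_gen i * p_gen k * (Epow_q r i * Epow_q s k))
      + (\<Sum>i<d. \<Sum>k<d. p_gen i * p_gen k * (Epow_q s i * Epow_q r k))"
    by (simp add: sum.distrib distrib_left)
  also have "\<dots> \<approx> b_gen r * b_gen s + b_gen s * b_gen r"
    by (intro pbw_cong_add pbw_cong_sym[OF b_mult_b])
  finally show ?thesis .
qed

section \<open>Explicit sums over index tuples\<close>

fun path_word :: "nat list \<Rightarrow> gen list" where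
  "path_word (i # j # is) = E i j # path_word (j # is)"
| "path_word _ = []"

lemma path_word_eq_map: "path_word is = map (\<lambda>k. E (is ! k) (is ! (k + 1))) [0..<length is - 1]"
proof (induction "is" rule: path_word.induct)
  case (1 i j "is")
  have "[0..<length (i # j # is) - 1] = 0 # map Suc [0..<length (j # is) - 1]"
    by (simp only: length_Cons diff_Suc_1 upt_conv_Cons[OF zero_less_Suc] map_Suc_upt[symmetric])
  then show ?case
    using 1 by (simp add: comp_def)
qed auto

definition paths :: "nat \<Rightarrow> nat \<Rightarrow> nat \<Rightarrow> nat list set" where
  "paths r i j = {is \<in> idx d (Suc r). is ! 0 = i \<and> is ! r = j}"

lemma finite_idx: "finite (idx d n)"
proof -
  have "idx d n = {xs. set xs \<subseteq> {..<d} \<and> length xs = n}"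
    unfolding idx_def by auto
  then show ?thesis
    using finite_lists_length_eq[of "{..<d}" n] by simp
qed

lemma finite_idx_filter [simp]: "finite {is \<in> idx d n. R is}"
  using finite_idx by simp

lemma paths_0: "i < d \<Longrightarrow> paths 0 i j = (if i = j then {[i]} else {})"
  unfolding paths_def idx_def by (auto simp: length_Suc_conv)

lemma paths_Suc: "i < d \<Longrightarrow> paths (Suc r) i j = (\<lambda>is. i # is) ` (\<Union>l<d. paths r l j)"
proof (intro equalityI subsetI)
  fix "is" assume "is \<in> paths (Suc r) i j" "i < d"
  then obtain is' where "is = i # is'" "is' \<in> paths r (is' ! 0) j" "is' ! 0 < d"
    unfolding paths_def idx_def by (cases "is"; cases "tl is") auto
  then show "is \<in> (\<lambda>is. i # is) ` (\<Union>l<d. paths r l j)"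
    by blast
qed (auto simp: paths_def idx_def)

lemma Epow_eq_sum_paths: "i < d \<Longrightarrow> Epow r i j = (\<Sum>is\<in>paths r i j. monom (path_word is))"
proof (induction r arbitrary: i)
  case 0
  then show ?case by (simp add: paths_0 monom_Nil)
next
  case (Suc r)
  have path_word_Cons: "monom (path_word (i # is)) = e_gen i l * monom (path_word is)"
    if "is \<in> paths r l j" for l "is"
    using that unfolding paths_def idx_def e_gen_def
    by (cases "is") (auto simp flip: monom_append)
  have "(\<Sum>is\<in>paths (Suc r) i j. monom (path_word is))
      = (\<Sum>is\<in>(\<Union>l<d. paths r l j). monom (path_word (i # is)))"
    unfolding paths_Suc[OF Suc.prems] by (subst sum.reindex) (auto simp: inj_on_def)
  also have "\<dots> = (\<Sum>l<d. \<Sum>is\<in>paths r l j. monom (path_word (i # is)))"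
    by (rule sum.UNION_disjoint) (auto simp: paths_def)
  also have "\<dots> = Epow (Suc r) i j"
    using Suc.IH by (simp add: path_word_Cons sum_distrib_left)
  finally show ?case ..
qed

lemma idx_Suc_eq_UN_paths: "idx d (Suc s) = (\<Union>i<d. \<Union>j<d. paths s i j)"
proof (intro equalityI subsetI)
  fix "is" assume "is \<in> idx d (Suc s)"
  moreover from this have "is ! 0 < d" "is ! s < d"
    unfolding idx_def by (auto intro!: nth_mem)
  ultimately show "is \<in> (\<Union>i<d. \<Union>j<d. paths s i j)"
    unfolding paths_def by auto
qed (auto simp: paths_def)

lemma path_word_closed: "length xs = r \<Longrightarrow> 0 < r \<Longrightarrow>
  path_word (xs @ [xs ! 0]) = map (\<lambda>k. E (xs ! k) (xs ! ((k + 1) mod r))) [0..<r]"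
proof -
  assume "length xs = r" "0 < r"
  then have "(xs @ [xs ! 0]) ! Suc k = xs ! (Suc k mod r)" if "k < r" for k
  proof (cases "Suc k < r")
    case False
    with that have "Suc k = r" by arith
    with \<open>length xs = r\<close> show ?thesis by (simp add: nth_append)
  qed (use \<open>length xs = r\<close> in \<open>simp add: nth_append\<close>)
  with \<open>length xs = r\<close> show ?thesis
    by (auto simp: path_word_eq_map nth_append)
qed

lemma closed_paths_eq_UN: "0 < r \<Longrightarrow> (\<lambda>xs. xs @ [xs ! 0]) ` idx d r = (\<Union>i<d. paths r i i)"
proof (intro equalityI subsetI)
  fix "is" assume "0 < r" "is \<in> (\<lambda>xs. xs @ [xs ! 0]) ` idx d r"
  then show "is \<in> (\<Union>i<d. paths r i i)"
    unfolding idx_def paths_def by (auto simp: nth_append)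
next
  fix "is" assume "0 < r" "is \<in> (\<Union>i<d. paths r i i)"
  then have "length is = Suc r" "is ! r = is ! 0" "take r is \<in> idx d r"
    unfolding paths_def idx_def by (auto dest: in_set_takeD)
  then have "is = take r is @ [take r is ! 0]"
    using \<open>0 < r\<close> take_Suc_conv_app_nth[of r "is"] by simp
  with \<open>take r is \<in> idx d r\<close> show "is \<in> (\<lambda>xs. xs @ [xs ! 0]) ` idx d r"
    by (intro image_eqI)
qed

lemma a_el_eq_Rep: "a_el d r = Rep_talg (a_gen r)"
proof (cases "r = 0")
  case True
  then show ?thesis
    by (simp add: a_el_def a_gen_def Rep_talg_of_nat)
next
  case False
  have inj: "inj_on (\<lambda>xs. xs @ [xs ! 0]) (idx d r)"
    unfolding inj_on_def idx_def by auto
  have "a_el d r = (\<Sum>xs\<in>idx d r. mon (path_word (xs @ [xs ! 0])))"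
    using False unfolding a_el_def by (auto simp: idx_def path_word_closed intro!: sum.cong)
  also have "\<dots> = (\<Sum>is\<in>(\<Union>i<d. paths r i i). mon (path_word is))"
    using False by (simp add: sum.reindex[OF inj] flip: closed_paths_eq_UN)
  also have "\<dots> = (\<Sum>i<d. \<Sum>is\<in>paths r i i. mon (path_word is))"
    by (rule sum.UNION_disjoint) (auto simp: paths_def)
  also have "\<dots> = Rep_talg (a_gen r)"
    by (simp add: a_gen_def Epow_eq_sum_paths Rep_talg_sum monom.rep_eq)
  finally show ?thesis .
qed

lemma b_el_eq_Rep: "b_el d s = Rep_talg (b_gen s)"
proof -
  define w where "w is = mon ([P (is ! 0)] @ map (\<lambda>k. E (is ! k) (is ! (k + 1))) [0..<s] @ [Q (is ! s)])"
    for "is"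
  have w_eq: "w is = Rep_talg (p_gen i * monom (path_word is) * q_gen j)" if "is \<in> paths s i j" for i j "is"
    using that unfolding w_def paths_def idx_def p_gen_def q_gen_def
    by (simp add: path_word_eq_map monom.rep_eq flip: monom_append)
  have "b_el d s = (\<Sum>i<d. \<Sum>is\<in>(\<Union>j<d. paths s i j). w is)"
    unfolding b_el_def idx_Suc_eq_UN_paths w_def by (rule sum.UNION_disjoint) (auto simp: paths_def)
  also have "\<dots> = (\<Sum>i<d. \<Sum>j<d. \<Sum>is\<in>paths s i j. w is)"
    by (intro sum.cong refl sum.UNION_disjoint) (auto simp: paths_def)
  also have "\<dots> = Rep_talg (b_gen s)"
    by (simp add: w_eq b_gen_def Epow_q_def Epow_eq_sum_paths Rep_talg_sum sum_distrib_left
        sum_distrib_right mult.assoc)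
  finally show ?thesis .
qed

end

lemma Yeq_Rep_if_pbw_cong: "pbw_cong d x y \<Longrightarrow> Yeq d (Rep_talg x) (Rep_talg y)"
  unfolding Yeq_def pbw_cong_def by (metis Rep_pbw_ideal minus_talg.rep_eq)

lemma tcomm_Rep: "tcomm (Rep_talg x) (Rep_talg y) = Rep_talg (comm x y)"
  by (simp add: tcomm_def comm_def minus_talg.rep_eq times_talg.rep_eq)

theorem proposition3p17:
  fixes d :: nat
  shows "\<forall>r s.
      Yeq d (tcomm (a_el d r) (a_el d s)) 0
    \<and> Yeq d (tcomm (a_el d 1) (b_el d s)) (b_el d s)
    \<and> Yeq d (tcomm (a_el d (Suc r)) (b_el d s) - tcomm (a_el d r) (b_el d (Suc s)))
            (b_el d (r + s) - (\<Sum>t<r. b_el d (r + s - t - 1) \<cdot> a_el d t))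
    \<and> Yeq d (tcomm (b_el d (Suc r)) (b_el d s) - tcomm (b_el d r) (b_el d (Suc s)))
            (b_el d r \<cdot> b_el d s + b_el d s \<cdot> b_el d r)"
proof (intro allI conjI)
  fix r s
  note Rep_simps = a_el_eq_Rep b_el_eq_Rep tcomm_Rep zero_talg.rep_eq plus_talg.rep_eq
    minus_talg.rep_eq times_talg.rep_eq Rep_talg_sum
  show "Yeq d (tcomm (a_el d r) (a_el d s)) 0"
    using Yeq_Rep_if_pbw_cong[OF comm_a_a] by (simp add: Rep_simps)
  show "Yeq d (tcomm (a_el d 1) (b_el d s)) (b_el d s)"
    using Yeq_Rep_if_pbw_cong[OF comm_a_1_b] by (simp add: Rep_simps)
  show "Yeq d (tcomm (a_el d (Suc r)) (b_el d s) - tcomm (a_el d r) (b_el d (Suc s)))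
      (b_el d (r + s) - (\<Sum>t<r. b_el d (r + s - t - 1) \<cdot> a_el d t))"
    using Yeq_Rep_if_pbw_cong[OF comm_a_b_shift] by (simp add: Rep_simps)
  show "Yeq d (tcomm (b_el d (Suc r)) (b_el d s) - tcomm (b_el d r) (b_el d (Suc s)))
      (b_el d r \<cdot> b_el d s + b_el d s \<cdot> b_el d r)"
    using Yeq_Rep_if_pbw_cong[OF comm_b_b_shift] by (simp add: Rep_simps)
qed

end
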